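(* Let $\mathfrak g$ be a nonsemisimple complex Lie algebra, $\mathfrak p$ a nonperfect ideal of $\mathfrak g$, and $\phi:\mathfrak p\to\mathbb C$ a Lie algebra homomorphism. If $w\in W(\phi)$ is nonzero and $\varphi:\mathfrak p\to\mathbb C$ is a Lie algebra homomorphism such that $pw=\varphi(p)w$ for all $p\in\mathfrak p$, then $\varphi=\phi$. That is, every nonzero quasi-Whittaker vector in $W(\phi)$ is of type $\phi$.
   Context: A Lie algebra homomorphism $\phi:\mathfrak p\to\mathbb C$ is a linear map vanishing on $[\mathfrak p,\mathfrak p]$. Let $\mathbb C w_\phi$ be the one-dimensional $\mathfrak p$-module with $pw_\phi=\phi(p)w_\phi$, and $W(\phi)=\mathcal U(\mathfrak g)\otimes_{\mathcal U(\mathfrak p)}\mathbb C w_\phi$ (the universal quasi-Whittaker module of type $\phi$). *)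

theory Defs
  imports Complex_Main "HOL-Library.Function_Algebras"
begin

definition lie_algebra :: "(complex \<Rightarrow> 'g::ab_group_add \<Rightarrow> 'g) \<Rightarrow> ('g \<Rightarrow> 'g \<Rightarrow> 'g) \<Rightarrow> bool" where
  "lie_algebra sc br \<longleftrightarrow>
     vector_space sc \<and>
     (\<forall>a b x y z. br (sc a x + sc b y) z = sc a (br x z) + sc b (br y z)) \<and>
     (\<forall>a b x y z. br z (sc a x + sc b y) = sc a (br z x) + sc b (br z y)) \<and>
     (\<forall>x. br x x = 0) \<and>
     (\<forall>x y z. br x (br y z) + br y (br z x) + br z (br x y) = 0)"

definition derived :: "(complex \<Rightarrow> 'g::ab_group_add \<Rightarrow> 'g) \<Rightarrow> ('g \<Rightarrow> 'g \<Rightarrow> 'g) \<Rightarrow> 'g set \<Rightarrow> 'g set" where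
  "derived sc br A = module.span sc {br a b | a b. a \<in> A \<and> b \<in> A}"

definition lie_ideal :: "(complex \<Rightarrow> 'g::ab_group_add \<Rightarrow> 'g) \<Rightarrow> ('g \<Rightarrow> 'g \<Rightarrow> 'g) \<Rightarrow> 'g set \<Rightarrow> bool" where
  "lie_ideal sc br I \<longleftrightarrow> module.subspace sc I \<and> (\<forall>x p. p \<in> I \<longrightarrow> br x p \<in> I)"

definition solvable_ideal :: "(complex \<Rightarrow> 'g::ab_group_add \<Rightarrow> 'g) \<Rightarrow> ('g \<Rightarrow> 'g \<Rightarrow> 'g) \<Rightarrow> 'g set \<Rightarrow> bool" where
  "solvable_ideal sc br I \<longleftrightarrow> (\<exists>n. (derived sc br ^^ n) I = {0})"

definition semisimple :: "(complex \<Rightarrow> 'g::ab_group_add \<Rightarrow> 'g) \<Rightarrow> ('g \<Rightarrow> 'g \<Rightarrow> 'g) \<Rightarrow> bool" where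
  "semisimple sc br \<longleftrightarrow> (UNIV :: 'g set) \<noteq> {0} \<and>
     (\<forall>I. lie_ideal sc br I \<and> solvable_ideal sc br I \<longrightarrow> I = {0})"

definition lie_hom_to_C :: "(complex \<Rightarrow> 'g::ab_group_add \<Rightarrow> 'g) \<Rightarrow> ('g \<Rightarrow> 'g \<Rightarrow> 'g) \<Rightarrow> 'g set \<Rightarrow> ('g \<Rightarrow> complex) \<Rightarrow> bool" where
  "lie_hom_to_C sc br P \<phi> \<longleftrightarrow>
     (\<forall>a b x y. x \<in> P \<longrightarrow> y \<in> P \<longrightarrow> \<phi> (sc a x + sc b y) = a * \<phi> x + b * \<phi> y) \<and>
     (\<forall>x y. x \<in> P \<longrightarrow> y \<in> P \<longrightarrow> \<phi> (br x y) = 0)"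

text \<open>Free complex vector space on words in 'g: finitely supported functions.
The universal quasi-Whittaker module W(phi) = U(g) \<otimes>_{U(p)} C w_phi is the quotient of this
space by the subspace whrel generated by multilinearity relations (giving T(g)),
the relations u x y v - u y x v - u [x,y] v (giving U(g)), and u p - phi(p) u for p in P
(the induction from C w_phi). A word u represents the element u \<otimes> w_phi.\<close>

definition fin_supp :: "('w \<Rightarrow> complex) \<Rightarrow> bool" where
  "fin_supp f \<longleftrightarrow> finite {w. f w \<noteq> 0}"

definition fscale :: "complex \<Rightarrow> ('w \<Rightarrow> complex) \<Rightarrow> ('w \<Rightarrow> complex)" where
  "fscale c f = (\<lambda>w. c * f w)"

definition delta :: "'w \<Rightarrow> ('w \<Rightarrow> complex)" where
  "delta u = (\<lambda>w. if w = u then 1 else 0)"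

definition whit_gens :: "(complex \<Rightarrow> 'g::ab_group_add \<Rightarrow> 'g) \<Rightarrow> ('g \<Rightarrow> 'g \<Rightarrow> 'g) \<Rightarrow> 'g set \<Rightarrow> ('g \<Rightarrow> complex)
    \<Rightarrow> ('g list \<Rightarrow> complex) set" where
  "whit_gens sc br P \<phi> =
     {delta (u @ [sc a x + sc b y] @ v) - fscale a (delta (u @ [x] @ v)) - fscale b (delta (u @ [y] @ v))
        | u v a b x y. True}
   \<union> {delta (u @ [x, y] @ v) - delta (u @ [y, x] @ v) - delta (u @ [br x y] @ v) | u v x y. True}
   \<union> {delta (u @ [p]) - fscale (\<phi> p) (delta u) | u p. p \<in> P}"

definition whrel :: "(complex \<Rightarrow> 'g::ab_group_add \<Rightarrow> 'g) \<Rightarrow> ('g \<Rightarrow> 'g \<Rightarrow> 'g) \<Rightarrow> 'g set \<Rightarrow> ('g \<Rightarrow> complex)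
    \<Rightarrow> ('g list \<Rightarrow> complex) set" where
  "whrel sc br P \<phi> = module.span fscale (whit_gens sc br P \<phi>)"

definition wact :: "'g \<Rightarrow> ('g list \<Rightarrow> complex) \<Rightarrow> ('g list \<Rightarrow> complex)" where
  "wact x f = (\<lambda>w. if w \<noteq> [] \<and> hd w = x then f (tl w) else 0)"

end

theory Submission
  imports Defs
begin

text \<open>Filter \<open>W(\<phi>)\<close> by word length. Because \<open>\<mathfrak>p\<close> is an ideal, a letter \<open>p \<in> \<mathfrak>p\<close> can be
commuted to the end of a word, where it acts by \<open>\<phi>(p)\<close>, at the cost of words that are one letter
shorter; hence \<open>p - \<phi>(p)\<close> lowers the filtration degree. If \<open>p w = \<psi>(p) w\<close> with \<open>\<psi>(p) \<noteq> \<phi>(p)\<close>,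
then \<open>w\<close> is a nonzero multiple of \<open>(p - \<phi>(p)) w\<close> and so has lower degree than itself; descending
to degree \<open>0\<close> gives \<open>w = 0\<close> in \<open>W(\<phi>)\<close>.\<close>

interpretation fv: vector_space "fscale :: complex \<Rightarrow> ('w \<Rightarrow> complex) \<Rightarrow> _"
  by unfold_locales (auto simp: fscale_def fun_eq_iff algebra_simps)

lemma wact_delta: "wact x (delta u) = delta (x # u)"
  by (auto simp: wact_def delta_def fun_eq_iff neq_Nil_conv)

lemma module_hom_wact_minus_scale: "module_hom fscale fscale (\<lambda>f. wact x f - fscale c f)"
  by unfold_locales (auto simp: wact_def fscale_def fun_eq_iff algebra_simps)

lemma fin_supp_eq_sum_delta:
  fixes w :: "'w \<Rightarrow> complex"
  assumes "fin_supp w"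
  shows "w = (\<Sum>u\<in>{u. w u \<noteq> 0}. fscale (w u) (delta u))"
proof
  fix v :: 'w
  let ?S = "{u. w u \<noteq> 0}"
  have sum_apply: "(\<Sum>u\<in>S. f u) v = (\<Sum>u\<in>S. f u v)" for S and f :: "'w \<Rightarrow> 'w \<Rightarrow> complex"
    by (induction S rule: infinite_finite_induct) auto
  have "(\<Sum>u\<in>?S. fscale (w u) (delta u)) v = (\<Sum>u\<in>?S. fscale (w u) (delta u) v)"
    by (rule sum_apply)
  also have "\<dots> = (\<Sum>u\<in>?S. if v = u then w u else 0)"
    by (intro sum.cong) (auto simp: fscale_def delta_def)
  also have "\<dots> = w v"
    using assms by (auto simp: fin_supp_def)
  finally show "w v = (\<Sum>u\<in>?S. fscale (w u) (delta u)) v" by simp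
qed

context
  fixes sc :: "complex \<Rightarrow> 'g::ab_group_add \<Rightarrow> 'g"
    and br :: "'g \<Rightarrow> 'g \<Rightarrow> 'g"
    and P :: "'g set"
    and \<phi> :: "'g \<Rightarrow> complex"
begin

lemma wact_whit_gens:
  assumes "g \<in> whit_gens sc br P \<phi>"
  shows "wact x g \<in> whit_gens sc br P \<phi>"
proof -
  have wact_diff: "wact x (f - h) = wact x f - wact x h" for f h
    by (auto simp: wact_def fun_eq_iff)
  have wact_scale: "wact x (fscale c f) = fscale c (wact x f)" for c f
    by (auto simp: wact_def fscale_def fun_eq_iff)
  note wact = wact_diff wact_scale wact_delta
  from assms[unfolded whit_gens_def] show ?thesis
  proof (elim UnE CollectE exE conjE)
    fix u v a b y z
    assume "g = delta (u @ [sc a y + sc b z] @ v) - fscale a (delta (u @ [y] @ v))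
      - fscale b (delta (u @ [z] @ v))"
    then have "wact x g = delta ((x # u) @ [sc a y + sc b z] @ v)
      - fscale a (delta ((x # u) @ [y] @ v)) - fscale b (delta ((x # u) @ [z] @ v))"
      by (simp add: wact)
    then show ?thesis unfolding whit_gens_def by blast
  next
    fix u v y z
    assume "g = delta (u @ [y, z] @ v) - delta (u @ [z, y] @ v) - delta (u @ [br y z] @ v)"
    then have "wact x g = delta ((x # u) @ [y, z] @ v) - delta ((x # u) @ [z, y] @ v)
      - delta ((x # u) @ [br y z] @ v)"
      by (simp add: wact)
    then show ?thesis unfolding whit_gens_def by blast
  next
    fix u p
    assume "g = delta (u @ [p]) - fscale (\<phi> p) (delta u)" and "p \<in> P"
    then have "wact x g = delta ((x # u) @ [p]) - fscale (\<phi> p) (delta (x # u))"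
      by (simp add: wact)
    with \<open>p \<in> P\<close> show ?thesis unfolding whit_gens_def by blast
  qed
qed

definition whit_filtration :: "nat \<Rightarrow> ('g list \<Rightarrow> complex) set" where
  "whit_filtration n = fv.span ({delta u | u. length u < n} \<union> whit_gens sc br P \<phi>)"

lemma subspace_whit_filtration: "fv.subspace (whit_filtration n)"
  unfolding whit_filtration_def by (rule fv.subspace_span)

lemma whit_filtration_0: "whit_filtration 0 = whrel sc br P \<phi>"
  unfolding whit_filtration_def whrel_def by simp

lemma whit_filtration_mono: "m \<le> n \<Longrightarrow> whit_filtration m \<subseteq> whit_filtration n"
  unfolding whit_filtration_def by (rule fv.span_mono) auto

lemma delta_in_whit_filtration: "length u < n \<Longrightarrow> delta u \<in> whit_filtration n"
  unfolding whit_filtration_def by (rule fv.span_base) auto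

lemma whit_gens_in_whit_filtration: "g \<in> whit_gens sc br P \<phi> \<Longrightarrow> g \<in> whit_filtration n"
  unfolding whit_filtration_def by (rule fv.span_base) auto

lemma fin_supp_in_whit_filtration:
  assumes "fin_supp w"
  obtains n where "w \<in> whit_filtration n"
proof -
  have "finite {u. w u \<noteq> 0}" using assms by (simp add: fin_supp_def)
  then obtain n where n: "\<forall>u\<in>{u. w u \<noteq> 0}. length u < n"
    by (metis finite_nat_set_iff_bounded finite_imageI imageI)
  have "(\<Sum>u\<in>{u. w u \<noteq> 0}. fscale (w u) (delta u)) \<in> whit_filtration n"
    using n by (intro fv.subspace_sum fv.subspace_scale subspace_whit_filtration
        delta_in_whit_filtration) auto
  then show ?thesis using that fin_supp_eq_sum_delta[OF assms] by simp
qed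

context
  assumes ideal: "\<And>x q. q \<in> P \<Longrightarrow> br x q \<in> P"
begin

lemma delta_ideal_letter_congruence:
  "q \<in> P \<Longrightarrow> delta (u @ q # v) - fscale (\<phi> q) (delta (u @ v)) \<in> whit_filtration (length u + length v)"
proof (induction v arbitrary: u q)
  case Nil
  then have "delta (u @ [q]) - fscale (\<phi> q) (delta u) \<in> whit_gens sc br P \<phi>"
    unfolding whit_gens_def by blast
  then show ?case
    by (simp only: append_Nil2 list.size(3) add_0_right whit_gens_in_whit_filtration)
next
  case (Cons x v)
  let ?M = "whit_filtration (length u + length (x # v))"
  have commutator: "delta (u @ [x, q] @ v) - delta (u @ [q, x] @ v) - delta (u @ [br x q] @ v) \<in> ?M"
    by (rule whit_gens_in_whit_filtration) (unfold whit_gens_def, blast)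
  have "delta ((u @ [x]) @ q # v) - fscale (\<phi> q) (delta ((u @ [x]) @ v))
      \<in> whit_filtration (length (u @ [x]) + length v)"
    using Cons.prems by (rule Cons.IH)
  moreover have "length (u @ [x]) + length v = length u + length (x # v)" by simp
  ultimately have move_right: "delta (u @ x # q # v) - fscale (\<phi> q) (delta (u @ x # v)) \<in> ?M"
    by (simp only: append_assoc append_Cons append_Nil)
  have "delta (u @ br x q # v) - fscale (\<phi> (br x q)) (delta (u @ v))
      \<in> whit_filtration (length u + length v)"
    using ideal[OF Cons.prems] by (rule Cons.IH)
  then have bracket: "delta (u @ br x q # v) - fscale (\<phi> (br x q)) (delta (u @ v)) \<in> ?M"
    by (rule subsetD[OF whit_filtration_mono, rotated]) simp
  have shorter: "delta (u @ v) \<in> ?M" by (rule delta_in_whit_filtration) simp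
  \<comment> \<open>\<open>q x = x q - [x, q]\<close>, and both \<open>q\<close> and \<open>[x, q] \<in> \<mathfrak>p\<close> are moved to the end by induction\<close>
  have "delta (u @ q # x # v) - fscale (\<phi> q) (delta (u @ x # v)) =
      (delta (u @ x # q # v) - fscale (\<phi> q) (delta (u @ x # v)))
      - (delta (u @ br x q # v) - fscale (\<phi> (br x q)) (delta (u @ v)))
      - fscale (\<phi> (br x q)) (delta (u @ v))
      - (delta (u @ [x, q] @ v) - delta (u @ [q, x] @ v) - delta (u @ [br x q] @ v))"
    by (simp add: algebra_simps)
  also have "\<dots> \<in> ?M"
    by (intro commutator move_right bracket shorter
        fv.subspace_diff fv.subspace_scale subspace_whit_filtration)
  finally show ?case .
qed

lemma wact_ideal_lowers_whit_filtration:
  assumes "p \<in> P" and "f \<in> whit_filtration (Suc n)"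
  shows "wact p f - fscale (\<phi> p) f \<in> whit_filtration n"
proof -
  let ?T = "\<lambda>f. wact p f - fscale (\<phi> p) f"
  have "?T (delta u) \<in> whit_filtration n" if "length u < Suc n" for u
    using delta_ideal_letter_congruence[OF \<open>p \<in> P\<close>, of "[]" u]
      whit_filtration_mono[of "length u" n] that
    by (auto simp: wact_delta)
  moreover have "?T g \<in> whit_filtration n" if "g \<in> whit_gens sc br P \<phi>" for g
    using that wact_whit_gens subspace_whit_filtration whit_gens_in_whit_filtration
    by (intro fv.subspace_diff fv.subspace_scale) auto
  moreover have "fv.subspace (?T -` whit_filtration n)"
    by (rule module_hom.subspace_vimage[OF module_hom_wact_minus_scale subspace_whit_filtration])
  ultimately have "whit_filtration (Suc n) \<subseteq> ?T -` whit_filtration n"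
    unfolding whit_filtration_def by (intro fv.span_minimal) auto
  with assms(2) show ?thesis by blast
qed

lemma quasi_whittaker_vector_in_whrel:
  assumes "p \<in> P" and "c \<noteq> \<phi> p" and "fin_supp w"
    and eigen: "wact p w - fscale c w \<in> whrel sc br P \<phi>"
  shows "w \<in> whrel sc br P \<phi>"
proof -
  have descend: "w \<in> whit_filtration n" if "w \<in> whit_filtration (Suc n)" for n
  proof -
    have "wact p w - fscale c w \<in> whit_filtration n"
      using eigen whit_filtration_mono[of 0 n] by (auto simp: whit_filtration_0)
    with wact_ideal_lowers_whit_filtration[OF \<open>p \<in> P\<close> that]
    have "(wact p w - fscale (\<phi> p) w) - (wact p w - fscale c w) \<in> whit_filtration n"
      by (rule fv.subspace_diff[OF subspace_whit_filtration])
    then have "fscale (c - \<phi> p) w \<in> whit_filtration n"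
      by (simp add: fv.scale_left_diff_distrib)
    then have "fscale (inverse (c - \<phi> p)) (fscale (c - \<phi> p) w) \<in> whit_filtration n"
      by (rule fv.subspace_scale[OF subspace_whit_filtration])
    with \<open>c \<noteq> \<phi> p\<close> show ?thesis by simp
  qed
  obtain n where "w \<in> whit_filtration n"
    using fin_supp_in_whit_filtration \<open>fin_supp w\<close> .
  then have "w \<in> whit_filtration 0"
    by (induction n) (auto intro: descend)
  then show ?thesis by (simp add: whit_filtration_0)
qed

end

end

theorem proposition2p6:
  fixes sc :: "complex \<Rightarrow> 'g::ab_group_add \<Rightarrow> 'g"
    and br :: "'g \<Rightarrow> 'g \<Rightarrow> 'g"
    and P :: "'g set"
    and \<phi> \<psi> :: "'g \<Rightarrow> complex"
    and w :: "'g list \<Rightarrow> complex"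
  assumes "lie_algebra sc br"
    and "\<not> semisimple sc br"
    and "lie_ideal sc br P"
    and "derived sc br P \<noteq> P"
    and "lie_hom_to_C sc br P \<phi>"
    and "fin_supp w"
    and "w \<notin> whrel sc br P \<phi>"
    and "lie_hom_to_C sc br P \<psi>"
    and "\<forall>p\<in>P. wact p w - fscale (\<psi> p) w \<in> whrel sc br P \<phi>"
  shows "\<forall>p\<in>P. \<psi> p = \<phi> p"
proof
  fix p assume "p \<in> P"
  have ideal: "\<And>x q. q \<in> P \<Longrightarrow> br x q \<in> P"
    using \<open>lie_ideal sc br P\<close> by (simp add: lie_ideal_def)
  show "\<psi> p = \<phi> p"
    using quasi_whittaker_vector_in_whrel[where br=br and P=P, OF ideal \<open>p \<in> P\<close> _ \<open>fin_supp w\<close>]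
      \<open>w \<notin> whrel sc br P \<phi>\<close> assms(9) \<open>p \<in> P\<close>
    by blast
qed

end
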